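(* Let $S$ be a finite symmetric generating set of $\mathbb{Z}$ and $(X_n)_{n\ge0}$ the lazy random walk on $\mathrm{Cay}(\mathbb{Z},S)$. Then $$\mathbb{E}[D_{\mathbb{Z}}(X_n)]\xrightarrow[n\to\infty]{}2+\sum_{k\ge2}\frac{1}{[\mathbb{Z}:\Lambda_k]}<\infty.$$
   Context: For $x\ne0$, $D_{\mathbb{Z}}(x)=\min\{[\mathbb{Z}:N]: N \text{ a finite index subgroup of }\mathbb{Z},\ x\notin N\}$, and $D_{\mathbb{Z}}(0)=0$. $\Lambda_k$ ($k\ge2$) is the intersection of all subgroups of $\mathbb{Z}$ of index at most $k$. The lazy random walk starts at $0$ and at each step stays put with probability $1/2$ and otherwise adds a uniformly chosen element of $S$. *)

theory Defs
  imports "HOL-Probability.Probability"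
begin

definition int_subgroup :: "int set \<Rightarrow> bool" where
  "int_subgroup N \<longleftrightarrow> 0 \<in> N \<and> (\<forall>a\<in>N. \<forall>b\<in>N. a - b \<in> N)"

definition int_cosets :: "int set \<Rightarrow> int set set" where
  "int_cosets N = {{x + n | n. n \<in> N} | x. True}"

definition finite_index :: "int set \<Rightarrow> bool" where
  "finite_index N \<longleftrightarrow> int_subgroup N \<and> finite (int_cosets N)"

definition int_index :: "int set \<Rightarrow> nat" where
  "int_index N = card (int_cosets N)"

definition DZ :: "int \<Rightarrow> nat" where
  "DZ x = (if x = 0 then 0
           else Inf {int_index N | N. finite_index N \<and> x \<notin> N})"

definition Lambda :: "nat \<Rightarrow> int set" where
  "Lambda k = \<Inter> {N. finite_index N \<and> int_index N \<le> k}"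

definition int_generated :: "int set \<Rightarrow> int set" where
  "int_generated S = \<Inter> {N. int_subgroup N \<and> S \<subseteq> N}"

definition lazy_step :: "int set \<Rightarrow> int pmf" where
  "lazy_step S = bind_pmf (bernoulli_pmf (1/2))
     (\<lambda>b. if b then return_pmf 0 else pmf_of_set S)"

primrec lazy_walk :: "int set \<Rightarrow> nat \<Rightarrow> int pmf" where
  "lazy_walk S 0 = return_pmf 0"
| "lazy_walk S (Suc n) = bind_pmf (lazy_walk S n) (\<lambda>x. map_pmf (\<lambda>s. x + s) (lazy_step S))"

end

theory Submission
  imports Defs
begin

(*
  The finite-index subgroups of Z are the mZ with m > 0, of index m. Hence Lambda_k = lcm(1..k) Z,
  and for x <> 0 the value D(x) is the least positive integer not dividing x, so x lies in
  Lambda_k exactly for k < D(x). This gives D = 2 * 1_{Z - {0}} + sum_{k >= 2} 1_{Lambda_k - {0}}.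

  The functions x |-> cos(t x) are eigenfunctions of the transition operator of the lazy walk,
  with eigenvalue phi(t) in [0, 1], and phi(2 pi j / m) < 1 for 0 < j < m because S generates Z;
  averaging over j shows P(m | X_n) -> 1/m. Writing the transition operator as an average of the
  half-shifts f |-> (f + f(. + s)) / 2 bounds P(X_n = x) by a binomial average of central binomial
  probabilities, which is O(n^(-1/2)). So the k-th term converges to 1/[Z : Lambda_k].
  Since lcm(1..k+2) >= (k+1)^3 / 4, counting the multiples of lcm(1..k+2) in
  [-(k+1) sqrt n, (k+1) sqrt n] and applying Chebyshev's inequality (E X_n^2 = O(n)) outside
  bounds the k-th term by O(k^(-2)) uniformly in n, and Tannery's theorem exchanges limit and sum.
*)

section \<open>Subgroups of the integers\<close>

lemma int_subgroup_zero: "int_subgroup N \<Longrightarrow> 0 \<in> N"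
  by (simp add: int_subgroup_def)

lemma int_subgroup_diff: "int_subgroup N \<Longrightarrow> a \<in> N \<Longrightarrow> b \<in> N \<Longrightarrow> a - b \<in> N"
  by (simp add: int_subgroup_def)

lemma int_subgroup_uminus: "int_subgroup N \<Longrightarrow> a \<in> N \<Longrightarrow> - a \<in> N"
  using int_subgroup_diff[of N 0 a] int_subgroup_zero by auto

lemma int_subgroup_add: "int_subgroup N \<Longrightarrow> a \<in> N \<Longrightarrow> b \<in> N \<Longrightarrow> a + b \<in> N"
  using int_subgroup_diff[of N a "- b"] int_subgroup_uminus by auto

lemma int_subgroup_mult_nat: "int_subgroup N \<Longrightarrow> a \<in> N \<Longrightarrow> a * int k \<in> N"
  by (induction k) (auto simp: int_subgroup_zero algebra_simps intro: int_subgroup_add)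

lemma int_subgroup_mult:
  assumes "int_subgroup N" "a \<in> N"
  shows "a * k \<in> N"
proof (cases "k \<ge> 0")
  case True
  then show ?thesis using int_subgroup_mult_nat[OF assms, of "nat k"] by simp
next
  case False
  then show ?thesis
    using int_subgroup_uminus[OF assms(1) int_subgroup_mult_nat[OF assms, of "nat (- k)"]] by simp
qed

lemma int_subgroup_multiples: "int_subgroup {y. (m::int) dvd y}"
  by (auto simp: int_subgroup_def)

lemma int_generated_least: "int_subgroup N \<Longrightarrow> S \<subseteq> N \<Longrightarrow> int_generated S \<subseteq> N"
  unfolding int_generated_def by blast

lemma int_subgroup_eq_multiples:
  assumes N: "int_subgroup N" and "N \<noteq> {0}"
  shows "\<exists>m>0. N = {y. m dvd y}"
proof -
  obtain x where x: "x \<in> N" "x \<noteq> 0" using int_subgroup_zero[OF N] \<open>N \<noteq> {0}\<close> by blast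
  have "\<exists>n. 0 < n \<and> int n \<in> N"
    using x int_subgroup_uminus[OF N] by (intro exI[of _ "nat \<bar>x\<bar>"]) (cases "x \<ge> 0", auto)
  define n where "n = (LEAST n. 0 < n \<and> int n \<in> N)"
  have n: "0 < n" "int n \<in> N" using LeastI_ex[OF \<open>\<exists>n. 0 < n \<and> int n \<in> N\<close>] unfolding n_def by auto
  have least: "\<And>k. 0 < k \<Longrightarrow> int k \<in> N \<Longrightarrow> n \<le> k" unfolding n_def by (simp add: Least_le)
  have "N = {y. int n dvd y}"
  proof (intro set_eqI iffI)
    fix y assume "y \<in> N"
    then have r: "y mod int n \<in> N"
      using int_subgroup_diff[OF N _ int_subgroup_mult[OF N n(2)], of y "y div int n"]
      by (simp add: minus_mult_div_eq_mod)
    show "y \<in> {y. int n dvd y}"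
    proof (rule ccontr)
      assume "y \<notin> {y. int n dvd y}"
      then have "0 < nat (y mod int n)" using n(1) by (simp add: dvd_eq_mod_eq_0 order_le_neq_trans)
      then have "n \<le> nat (y mod int n)" using least[of "nat (y mod int n)"] r by simp
      then have "int n \<le> y mod int n" using n(1) by (simp add: le_nat_iff)
      moreover have "y mod int n < int n" using n(1) by simp
      ultimately show False by simp
    qed
  next
    fix y assume "y \<in> {y. int n dvd y}"
    then show "y \<in> N" using int_subgroup_mult[OF N n(2)] by auto
  qed
  then show ?thesis using n(1) by (intro exI[of _ "int n"]) simp
qed

lemma int_cosets_multiples:
  assumes "m > 0"
  shows "int_cosets {y. m dvd y} = (\<lambda>r. {y. y mod m = r}) ` {0..<m}"
proof -
  have coset: "{x + n |n. n \<in> {y. m dvd y}} = {y. y mod m = x mod m}" for x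
  proof (intro set_eqI iffI)
    fix y assume "y \<in> {y. y mod m = x mod m}"
    then have "m dvd y - x" by (simp add: mod_eq_dvd_iff)
    then show "y \<in> {x + n |n. n \<in> {y. m dvd y}}" by (intro CollectI exI[of _ "y - x"]) auto
  qed (auto simp: mod_eq_dvd_iff)
  have "range (\<lambda>x. x mod m) = {0..<m}"
  proof (intro set_eqI iffI)
    fix r assume "r \<in> {0..<m}"
    then show "r \<in> range (\<lambda>x. x mod m)" by (intro range_eqI[of _ _ r]) simp
  qed (use assms in auto)
  moreover have "int_cosets {y. m dvd y} = (\<lambda>r. {y. y mod m = r}) ` range (\<lambda>x. x mod m)"
    unfolding int_cosets_def coset by blast
  ultimately show ?thesis by simp
qed

lemma
  assumes "m > 0"
  shows finite_int_cosets_multiples: "finite (int_cosets {y. m dvd y})"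
    and int_index_multiples: "int_index {y. m dvd y} = nat m"
proof -
  have "inj_on (\<lambda>r. {y. y mod m = r}) {0..<m}"
    by (rule inj_onI) (metis (mono_tags) atLeastLessThan_iff mem_Collect_eq mod_pos_pos_trivial)
  then show "finite (int_cosets {y. m dvd y})" "int_index {y. m dvd y} = nat m"
    unfolding int_index_def int_cosets_multiples[OF assms] by (simp_all add: card_image)
qed

lemma infinite_int_cosets_zero: "infinite (int_cosets {0})"
proof -
  have "int_cosets {0} = range (\<lambda>x. {x})" unfolding int_cosets_def by auto
  then show ?thesis using finite_imageD[of "\<lambda>x::int. {x}" UNIV] infinite_UNIV_int by (auto intro: injI)
qed

lemma finite_index_iff: "finite_index N \<longleftrightarrow> (\<exists>m>0. N = {y. m dvd y})"
proof
  assume "finite_index N"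
  then have "int_subgroup N" "N \<noteq> {0}" using infinite_int_cosets_zero by (auto simp: finite_index_def)
  then show "\<exists>m>0. N = {y. m dvd y}" by (rule int_subgroup_eq_multiples)
next
  assume "\<exists>m>0. N = {y. m dvd y}"
  then show "finite_index N"
    using int_subgroup_multiples finite_int_cosets_multiples by (auto simp: finite_index_def)
qed

section \<open>The subgroups \<open>\<Lambda>\<^sub>k\<close> and the function \<open>D\<^sub>\<int>\<close>\<close>

definition lcm_upto :: "nat \<Rightarrow> int" where
  "lcm_upto k = Lcm (int ` {1..k})"

lemma lcm_upto_pos: "lcm_upto k > 0"
proof -
  have "lcm_upto k \<noteq> 0" unfolding lcm_upto_def by (subst Lcm_0_iff) auto
  then show ?thesis using Lcm_int_greater_eq_0 unfolding lcm_upto_def by (simp add: order_le_neq_trans)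
qed

lemma lcm_upto_dvd_iff: "lcm_upto k dvd x \<longleftrightarrow> (\<forall>m\<in>{1..k}. int m dvd x)"
  unfolding lcm_upto_def Lcm_dvd_iff by auto

lemma int_dvd_lcm_upto: "1 \<le> m \<Longrightarrow> m \<le> k \<Longrightarrow> int m dvd lcm_upto k"
  unfolding lcm_upto_def by (intro dvd_Lcm) auto

lemma Lambda_eq_multiples: "Lambda k = {y. lcm_upto k dvd y}"
proof (intro set_eqI iffI)
  fix y assume y: "y \<in> Lambda k"
  have "int m dvd y" if "m \<in> {1..k}" for m
  proof -
    have "finite_index {y. int m dvd y}"
      unfolding finite_index_iff using that by (intro exI[of _ "int m"]) simp
    moreover have "int_index {y. int m dvd y} \<le> k" using that by (simp add: int_index_multiples)
    ultimately have "y \<in> {y. int m dvd y}" using y unfolding Lambda_def by blast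
    then show ?thesis by simp
  qed
  then show "y \<in> {y. lcm_upto k dvd y}" by (simp add: lcm_upto_dvd_iff)
next
  fix y assume y: "y \<in> {y. lcm_upto k dvd y}"
  show "y \<in> Lambda k" unfolding Lambda_def
  proof (rule InterI)
    fix N assume "N \<in> {N. finite_index N \<and> int_index N \<le> k}"
    then obtain m where m: "m > 0" "N = {y. m dvd y}" "nat m \<le> k"
      by (auto simp: finite_index_iff int_index_multiples)
    have "\<forall>m\<in>{1..k}. int m dvd y" using y by (simp add: lcm_upto_dvd_iff)
    moreover have "nat m \<in> {1..k}" using m by auto
    ultimately have "int (nat m) dvd y" by blast
    then show "y \<in> N" using m by simp
  qed
qed

lemma int_index_Lambda: "int_index (Lambda k) = nat (lcm_upto k)"
  unfolding Lambda_eq_multiples using int_index_multiples[OF lcm_upto_pos] .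

lemma DZ_eq_Inf:
  assumes "x \<noteq> 0"
  shows "DZ x = Inf {n. 0 < n \<and> \<not> int n dvd x}"
proof -
  have "{int_index N | N. finite_index N \<and> x \<notin> N} = {n. 0 < n \<and> \<not> int n dvd x}"
  proof (intro set_eqI iffI)
    fix n assume "n \<in> {int_index N | N. finite_index N \<and> x \<notin> N}"
    then show "n \<in> {n. 0 < n \<and> \<not> int n dvd x}"
      by (auto simp: finite_index_iff int_index_multiples)
  next
    fix n assume n: "n \<in> {n. 0 < n \<and> \<not> int n dvd x}"
    then have "finite_index {y. int n dvd y}"
      unfolding finite_index_iff by (intro exI[of _ "int n"]) simp
    then show "n \<in> {int_index N | N. finite_index N \<and> x \<notin> N}"
      using n int_index_multiples[of "int n"] by (intro CollectI exI[of _ "{y. int n dvd y}"]) auto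
  qed
  then show ?thesis using assms by (simp add: DZ_def)
qed

lemma
  assumes "x \<noteq> 0"
  shows DZ_pos: "0 < DZ x"
    and not_dvd_DZ: "\<not> int (DZ x) dvd x"
    and dvd_of_less_DZ: "0 < m \<Longrightarrow> m < DZ x \<Longrightarrow> int m dvd x"
proof -
  let ?K = "{n. 0 < n \<and> \<not> int n dvd x}"
  have "\<not> int (nat \<bar>x\<bar> + 1) dvd x"
  proof
    assume "int (nat \<bar>x\<bar> + 1) dvd x"
    then have "\<bar>int (nat \<bar>x\<bar> + 1)\<bar> \<le> \<bar>x\<bar>" by (rule dvd_imp_le_int[OF assms])
    then show False by simp
  qed
  then have "nat \<bar>x\<bar> + 1 \<in> ?K" by simp
  then have "?K \<noteq> {}" by (metis empty_iff)
  then have "DZ x \<in> ?K" unfolding DZ_eq_Inf[OF assms] by (rule Inf_nat_def1)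
  then show "0 < DZ x" "\<not> int (DZ x) dvd x" by auto
  show "int m dvd x" if "0 < m" "m < DZ x"
  proof (rule ccontr)
    assume "\<not> int m dvd x"
    then have "m \<in> ?K" using that by simp
    then have "DZ x \<le> m" unfolding DZ_eq_Inf[OF assms] by (rule cInf_lower) simp
    then show False using that by simp
  qed
qed

lemma two_le_DZ: "x \<noteq> 0 \<Longrightarrow> 2 \<le> DZ x"
  using DZ_pos[of x] not_dvd_DZ[of x] by (cases "DZ x = 1") auto

lemma lcm_upto_dvd_iff_less_DZ: "x \<noteq> 0 \<Longrightarrow> lcm_upto k dvd x \<longleftrightarrow> k < DZ x"
  using DZ_pos[of x] not_dvd_DZ[of x] dvd_of_less_DZ[of x]
  by (auto simp: lcm_upto_dvd_iff not_less)

lemma DZ_sums: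
  "(\<lambda>k. indicator (Lambda (k + 2) - {0}) x :: real) sums (real (DZ x) - 2 * indicator (- {0}) x)"
proof (cases "x = 0")
  case True
  then show ?thesis by (simp add: DZ_def)
next
  case False
  have "indicator (Lambda (k + 2) - {0}) x = (if k \<in> {..<DZ x - 2} then 1 else 0 :: real)" for k
    using lcm_upto_dvd_iff_less_DZ[OF False, of "k + 2"] False by (auto simp: Lambda_eq_multiples)
  then have "(\<lambda>k. indicator (Lambda (k + 2) - {0}) x :: real) sums (\<Sum>k<DZ x - 2. 1)"
    using sums_If_finite_set[of "{..<DZ x - 2}" "\<lambda>_. 1 :: real"] by simp
  then show ?thesis using False two_le_DZ[OF False] by (simp add: of_nat_diff)
qed

lemma lcm_upto_lower_bound: "int k * (int k + 1) * (int k + 2) \<le> 2 * lcm_upto (k + 2)"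
proof -
  have "int k + 1 dvd lcm_upto (k + 2)" "int k + 2 dvd lcm_upto (k + 2)"
    using int_dvd_lcm_upto[of "k + 1" "k + 2"] int_dvd_lcm_upto[of "k + 2" "k + 2"] by (simp_all add: ac_simps)
  moreover have "coprime (int k + 1) (int k + 2)"
    using coprime_add_one_right[of "int k + 1"] by (simp add: add.assoc)
  ultimately have "(int k + 1) * (int k + 2) dvd lcm_upto (k + 2)" by (rule divides_mult)
  then obtain u where u: "lcm_upto (k + 2) = (int k + 1) * (int k + 2) * u" ..
  have "0 < (int k + 1) * (int k + 2) * u" by (simp only: u[symmetric] lcm_upto_pos)
  then have "u > 0" by (rule zero_less_mult_pos) simp
  have "int k \<le> 2 * u"
  proof (cases "k = 0")
    case False
    have "(int k + 1) * (int k + 2) * u - int k * (int k + 3) * u = 2 * u"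
      by (simp add: algebra_simps)
    moreover have "int k dvd (int k + 1) * (int k + 2) * u - int k * (int k + 3) * u"
      using int_dvd_lcm_upto[of k "k + 2"] False u by (intro dvd_diff) auto
    ultimately show ?thesis using \<open>u > 0\<close> by (simp add: zdvd_imp_le)
  qed (use \<open>u > 0\<close> in simp)
  then have "int k * ((int k + 1) * (int k + 2)) \<le> 2 * u * ((int k + 1) * (int k + 2))"
    by (rule mult_right_mono) simp
  then show ?thesis unfolding u by (simp only: ac_simps)
qed

lemma lcm_upto_cube_bound: "(real k + 1) ^ 3 \<le> 4 * real_of_int (lcm_upto (k + 2))"
proof (cases "k = 0")
  case True
  have "1 \<le> lcm_upto (k + 2)" using lcm_upto_pos[of "k + 2"] by linarith
  then show ?thesis using True by simp
next
  case False
  have k: "1 \<le> real k" using False by simp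
  have "1 \<le> real k * real k" using mult_mono[OF k k] by simp
  then have "(real k + 1) * (real k + 1) \<le> 2 * (real k * (real k + 2))"
    using k by (simp add: algebra_simps)
  then have "(real k + 1) * ((real k + 1) * (real k + 1)) \<le> (real k + 1) * (2 * (real k * (real k + 2)))"
    by (rule mult_left_mono) simp
  then have "(real k + 1) ^ 3 \<le> 2 * (real k * (real k + 1) * (real k + 2))"
    by (simp only: power3_eq_cube ac_simps)
  also have "\<dots> \<le> 4 * real_of_int (lcm_upto (k + 2))"
  proof -
    have "real_of_int (int k * (int k + 1) * (int k + 2)) \<le> real_of_int (2 * lcm_upto (k + 2))"
      using lcm_upto_lower_bound[of k] by (simp only: of_int_le_iff)
    then show ?thesis by simp
  qed
  finally show ?thesis .
qed

section \<open>The lazy random walk as a Markov operator\<close>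

definition walk_op :: "int set \<Rightarrow> (int \<Rightarrow> real) \<Rightarrow> int \<Rightarrow> real" where
  "walk_op S f y = f y / 2 + (\<Sum>s\<in>S. f (y + s)) / (2 * card S)"

abbreviation walk_expectation :: "int set \<Rightarrow> nat \<Rightarrow> (int \<Rightarrow> real) \<Rightarrow> real" where
  "walk_expectation S n f \<equiv> measure_pmf.expectation (lazy_walk S n) f"

lemma set_pmf_lazy_step_subset:
  assumes "finite S" "S \<noteq> {}"
  shows "set_pmf (lazy_step S) \<subseteq> insert 0 S"
  unfolding lazy_step_def using set_pmf_of_set[OF assms(2,1)] by (auto split: if_splits)

lemma finite_set_pmf_lazy_walk:
  assumes "finite S" "S \<noteq> {}"
  shows "finite (set_pmf (lazy_walk S n))"
proof (induction n)
  case (Suc n)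
  have "finite (set_pmf (lazy_step S))"
    using finite_subset[OF set_pmf_lazy_step_subset[OF assms]] assms by simp
  then show ?case using Suc by (simp add: set_bind_pmf)
qed simp

lemma integrable_lazy_walk:
  "finite S \<Longrightarrow> S \<noteq> {} \<Longrightarrow> integrable (measure_pmf (lazy_walk S n)) (f :: int \<Rightarrow> real)"
  by (rule integrable_measure_pmf_finite[OF finite_set_pmf_lazy_walk])

lemma walk_expectation_mono:
  "finite S \<Longrightarrow> S \<noteq> {} \<Longrightarrow> (\<And>x. f x \<le> g x) \<Longrightarrow> walk_expectation S n f \<le> walk_expectation S n g"
  by (rule integral_mono[OF integrable_lazy_walk integrable_lazy_walk])

lemma walk_expectation_add:
  "finite S \<Longrightarrow> S \<noteq> {} \<Longrightarrow>
    walk_expectation S n (\<lambda>x. f x + g x) = walk_expectation S n f + walk_expectation S n g"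
  by (rule Bochner_Integration.integral_add[OF integrable_lazy_walk integrable_lazy_walk])

lemma expectation_lazy_step:
  assumes "finite S" "S \<noteq> {}"
  shows "measure_pmf.expectation (lazy_step S) g = g 0 / 2 + (\<Sum>s\<in>S. g s) / (2 * card S)"
proof -
  have "measure_pmf.expectation (lazy_step S) g =
      (\<Sum>b\<in>UNIV. pmf (bernoulli_pmf (1/2)) b *\<^sub>R
         measure_pmf.expectation (if b then return_pmf 0 else pmf_of_set S) g)"
    unfolding lazy_step_def using assms by (intro pmf_expectation_bind) auto
  then show ?thesis using assms by (simp add: UNIV_bool integral_pmf_of_set)
qed

lemma walk_expectation_Suc:
  assumes "finite S" "S \<noteq> {}"
  shows "walk_expectation S (Suc n) f = walk_expectation S n (walk_op S f)"
proof -
  let ?W = "lazy_walk S n"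
  have "finite (set_pmf (lazy_step S))"
    using finite_subset[OF set_pmf_lazy_step_subset[OF assms]] assms by simp
  then have "walk_expectation S (Suc n) f =
     (\<Sum>a\<in>set_pmf ?W. pmf ?W a *\<^sub>R measure_pmf.expectation (map_pmf (\<lambda>s. a + s) (lazy_step S)) f)"
    using finite_set_pmf_lazy_walk[OF assms]
    by (simp only: lazy_walk.simps, intro pmf_expectation_bind) auto
  also have "\<dots> = (\<Sum>a\<in>set_pmf ?W. pmf ?W a * walk_op S f a)"
    using assms by (simp add: expectation_lazy_step walk_op_def)
  also have "\<dots> = walk_expectation S n (walk_op S f)"
    using finite_set_pmf_lazy_walk[OF assms]
    by (subst integral_measure_pmf_real[of "set_pmf ?W"]) (auto simp: mult.commute)
  finally show ?thesis .
qed

lemma walk_expectation_eq_funpow: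
  assumes "finite S" "S \<noteq> {}"
  shows "walk_expectation S n f = (walk_op S ^^ n) f 0"
proof (induction n arbitrary: f)
  case (Suc n)
  then show ?case
    using walk_expectation_Suc[OF assms] by (simp add: funpow_Suc_right del: funpow.simps)
qed simp

lemma pmf_lazy_walk_eq_funpow:
  assumes "finite S" "S \<noteq> {}"
  shows "pmf (lazy_walk S n) x = (walk_op S ^^ n) (\<lambda>y. if y = x then 1 else 0) 0"
proof -
  have "pmf (lazy_walk S n) x = walk_expectation S n (\<lambda>y. if y = x then 1 else 0)"
    by (subst integral_measure_pmf_real[of "{x}"]) (auto split: if_splits)
  then show ?thesis using walk_expectation_eq_funpow[OF assms] by simp
qed

lemma walk_op_cmult: "walk_op S (\<lambda>x. c * f x) y = c * walk_op S f y"
  unfolding walk_op_def by (simp add: sum_distrib_left[symmetric] field_simps)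

lemma funpow_walk_op_cmult: "(walk_op S ^^ n) (\<lambda>x. c * f x) = (\<lambda>y. c * (walk_op S ^^ n) f y)"
  by (induction n) (simp_all add: walk_op_cmult)

lemma walk_op_sum: "finite J \<Longrightarrow> walk_op S (\<lambda>x. \<Sum>j\<in>J. f j x) y = (\<Sum>j\<in>J. walk_op S (f j) y)"
  unfolding walk_op_def by (simp add: sum.distrib sum_divide_distrib sum.swap[of _ S])

lemma funpow_walk_op_sum:
  "finite J \<Longrightarrow> (walk_op S ^^ n) (\<lambda>x. \<Sum>j\<in>J. f j x) = (\<lambda>y. \<Sum>j\<in>J. (walk_op S ^^ n) (f j) y)"
proof (induction n)
  case (Suc n)
  show ?case by (rule ext) (simp add: Suc walk_op_sum)
qed simp

lemma sum_odd_eq_zero: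
  fixes h :: "int \<Rightarrow> real"
  assumes "\<forall>s\<in>S. - s \<in> S" and "\<And>s. h (- s) = - h s"
  shows "(\<Sum>s\<in>S. h s) = 0"
proof -
  have "(\<Sum>s\<in>S. h (- s)) = (\<Sum>s\<in>S. h s)"
    by (rule sum.reindex_bij_witness[of S uminus uminus]) (use assms(1) in auto)
  then show ?thesis by (simp add: assms(2) sum_negf)
qed

section \<open>Second moment\<close>

definition lazy_step_var :: "int set \<Rightarrow> real" where
  "lazy_step_var S = (\<Sum>s\<in>S. (real_of_int s)^2) / (2 * card S)"

lemma lazy_step_var_nonneg: "lazy_step_var S \<ge> 0"
  unfolding lazy_step_var_def by (intro divide_nonneg_nonneg sum_nonneg) auto

lemma walk_op_square:
  assumes "finite S" "S \<noteq> {}" "\<forall>s\<in>S. - s \<in> S"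
  shows "walk_op S (\<lambda>x. (real_of_int x)^2 + c) = (\<lambda>y. (real_of_int y)^2 + c + lazy_step_var S)"
proof
  fix y
  have "(\<Sum>s\<in>S. (real_of_int (y + s))^2 + c) =
      (\<Sum>s\<in>S. ((real_of_int y)^2 + c) + 2 * real_of_int y * real_of_int s + (real_of_int s)^2)"
    by (intro sum.cong) (auto simp: power2_eq_square algebra_simps)
  also have "\<dots> = card S * ((real_of_int y)^2 + c) + 2 * real_of_int y * (\<Sum>s\<in>S. real_of_int s)
      + (\<Sum>s\<in>S. (real_of_int s)^2)"
    by (simp add: sum.distrib sum_distrib_left)
  also have "(\<Sum>s\<in>S. real_of_int s) = 0" using sum_odd_eq_zero[OF assms(3)] by simp
  finally show "walk_op S (\<lambda>x. (real_of_int x)^2 + c) y = (real_of_int y)^2 + c + lazy_step_var S"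
    using assms(1,2) unfolding walk_op_def lazy_step_var_def by (simp add: field_simps card_gt_0_iff)
qed

lemma walk_expectation_square:
  assumes "finite S" "S \<noteq> {}" "\<forall>s\<in>S. - s \<in> S"
  shows "walk_expectation S n (\<lambda>x. (real_of_int x)^2) = n * lazy_step_var S"
proof -
  have "(walk_op S ^^ n) (\<lambda>x. (real_of_int x)^2 + c) = (\<lambda>y. (real_of_int y)^2 + c + n * lazy_step_var S)"
    for c
  proof (induction n arbitrary: c)
    case (Suc n)
    have "(walk_op S ^^ Suc n) (\<lambda>x. (real_of_int x)^2 + c)
        = (walk_op S ^^ n) (\<lambda>y. (real_of_int y)^2 + (c + lazy_step_var S))"
      by (simp only: funpow_Suc_right o_apply walk_op_square[OF assms] add.assoc)
    also have "\<dots> = (\<lambda>y. (real_of_int y)^2 + c + Suc n * lazy_step_var S)"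
      by (simp only: Suc.IH) (simp add: algebra_simps)
    finally show ?case .
  qed simp
  from this[of 0] show ?thesis using walk_expectation_eq_funpow[OF assms(1,2)] by simp
qed

section \<open>Equidistribution modulo \<open>m\<close>\<close>

definition lazy_char :: "int set \<Rightarrow> real \<Rightarrow> real" where
  "lazy_char S t = 1/2 + (\<Sum>s\<in>S. cos (t * real_of_int s)) / (2 * card S)"

lemma walk_op_cos:
  assumes "\<forall>s\<in>S. - s \<in> S"
  shows "walk_op S (\<lambda>x. cos (t * real_of_int x)) = (\<lambda>y. lazy_char S t * cos (t * real_of_int y))"
proof
  fix y
  have "(\<Sum>s\<in>S. cos (t * real_of_int (y + s))) =
        (\<Sum>s\<in>S. cos (t * real_of_int y) * cos (t * real_of_int s) - sin (t * real_of_int y) * sin (t * real_of_int s))"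
    by (intro sum.cong) (auto simp: distrib_left cos_add)
  also have "\<dots> = cos (t * real_of_int y) * (\<Sum>s\<in>S. cos (t * real_of_int s))
      - sin (t * real_of_int y) * (\<Sum>s\<in>S. sin (t * real_of_int s))"
    by (simp add: sum_subtractf sum_distrib_left)
  also have "(\<Sum>s\<in>S. sin (t * real_of_int s)) = 0"
    using sum_odd_eq_zero[OF assms, of "\<lambda>s. sin (t * real_of_int s)"] by simp
  finally show "walk_op S (\<lambda>x. cos (t * real_of_int x)) y = lazy_char S t * cos (t * real_of_int y)"
    unfolding walk_op_def lazy_char_def by (simp add: field_simps)
qed

lemma funpow_walk_op_cos:
  assumes "\<forall>s\<in>S. - s \<in> S"
  shows "(walk_op S ^^ n) (\<lambda>x. cos (t * real_of_int x)) = (\<lambda>y. lazy_char S t ^ n * cos (t * real_of_int y))"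
proof (induction n)
  case (Suc n)
  then show ?case
    by (simp only: funpow_Suc_right o_apply walk_op_cos[OF assms])
      (simp add: funpow_walk_op_cmult mult.assoc)
qed simp

lemma lazy_char_zero: "finite S \<Longrightarrow> S \<noteq> {} \<Longrightarrow> lazy_char S 0 = 1"
  unfolding lazy_char_def by (simp add: card_gt_0_iff)

lemma lazy_char_bounds:
  assumes "finite S" "S \<noteq> {}"
  shows "0 \<le> lazy_char S t" "lazy_char S t \<le> 1"
proof -
  have "- real (card S) \<le> (\<Sum>s\<in>S. cos (t * real_of_int s))"
    using sum_mono[of S "\<lambda>_. -1" "\<lambda>s. cos (t * real_of_int s)"] by simp
  moreover have "(\<Sum>s\<in>S. cos (t * real_of_int s)) \<le> real (card S)"
    using sum_mono[of S "\<lambda>s. cos (t * real_of_int s)" "\<lambda>_. 1"] by simp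
  ultimately show "0 \<le> lazy_char S t" "lazy_char S t \<le> 1"
    using assms unfolding lazy_char_def by (simp_all add: field_simps card_gt_0_iff)
qed

lemma cos_eq_one_if_lazy_char_eq_one:
  assumes "finite S" "lazy_char S t = 1" "s \<in> S"
  shows "cos (t * real_of_int s) = 1"
proof -
  have "(\<Sum>s\<in>S. 1 - cos (t * real_of_int s)) = 0"
    using assms(1-3) unfolding lazy_char_def
    by (auto simp: sum_subtractf field_simps card_gt_0_iff)
  then have "\<forall>s\<in>S. 1 - cos (t * real_of_int s) = 0"
    using assms(1) by (subst sum_nonneg_eq_0_iff[symmetric]) auto
  then show ?thesis using assms(3) by simp
qed

text \<open>If \<open>lazy_char S (2\<pi>j/L) = 1\<close>, then \<open>L\<close> divides \<open>j s\<close> for every step \<open>s\<close>, hence for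
  every element of the generated group, in particular for \<open>1\<close>.\<close>

lemma lazy_char_less_one:
  assumes "finite S" "S \<noteq> {}" "int_generated S = UNIV"
    and "0 < j" "j < nat L"
  shows "lazy_char S (2 * pi * real j / real_of_int L) < 1"
proof (rule ccontr)
  assume "\<not> lazy_char S (2 * pi * real j / real_of_int L) < 1"
  then have char1: "lazy_char S (2 * pi * real j / real_of_int L) = 1"
    using lazy_char_bounds[OF assms(1,2)] by (simp add: not_less antisym)
  have "S \<subseteq> {y. L dvd int j * y}"
  proof
    fix s assume "s \<in> S"
    then have "cos (2 * pi * real j / real_of_int L * real_of_int s) = 1"
      using cos_eq_one_if_lazy_char_eq_one[OF assms(1) char1] by simp
    then obtain m :: int where "2 * pi * real j / real_of_int L * real_of_int s = real_of_int m * 2 * pi"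
      by (auto simp only: cos_one_2pi_int)
    then have "real_of_int (int j * s) = real_of_int (m * L)" using assms(5) by (simp add: field_simps)
    then show "s \<in> {y. L dvd int j * y}" by (simp only: of_int_eq_iff) simp
  qed
  moreover have "int_subgroup {y. L dvd int j * y}"
    unfolding int_subgroup_def by (auto simp: right_diff_distrib)
  ultimately have "1 \<in> {y. L dvd int j * y}" using int_generated_least assms(3) by blast
  then have "L \<le> int j" using assms(4) by (simp add: zdvd_imp_le)
  then show False using assms(5) by linarith
qed

lemma sum_cos_roots_of_unity:
  assumes L: "L > (0::int)"
  shows "(\<Sum>j<nat L. cos (2 * pi * real j / real_of_int L * real_of_int x))
           = (if L dvd x then real_of_int L else 0)"
proof (cases "L dvd x")
  case True
  then obtain k where k: "x = L * k" by auto
  have "cos (2 * pi * real j / real_of_int L * real_of_int x) = 1" for j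
  proof -
    have "2 * pi * real j / real_of_int L * real_of_int x = real_of_int (int j * k) * 2 * pi"
      using L unfolding k by (simp add: field_simps)
    then show ?thesis by (simp only: cos_one_2pi_int) blast
  qed
  then show ?thesis using True L by simp
next
  case False
  define z where "z = cis (2 * pi * real_of_int x / real_of_int L)"
  have z_pow: "z ^ j = cis (2 * pi * real j / real_of_int L * real_of_int x)" for j
  proof -
    have "z ^ j = cis (real j * (2 * pi * real_of_int x / real_of_int L))"
      unfolding z_def by (rule Complex.DeMoivre)
    then show ?thesis by (simp add: field_simps)
  qed
  have "z ^ nat L = 1"
    unfolding z_pow using L cis_multiple_2pi[of "real_of_int x"] by (simp add: field_simps)
  moreover have "z \<noteq> 1"
  proof
    assume "z = 1"
    then obtain m :: int where "2 * pi * real_of_int x / real_of_int L = real_of_int m * 2 * pi"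
      unfolding z_def by (metis cis.sel(1) cos_one_2pi_int one_complex.sel(1))
    then have "real_of_int x = real_of_int (m * L)" using L by (simp add: field_simps)
    then show False using False by (simp only: of_int_eq_iff) simp
  qed
  ultimately have "(\<Sum>j<nat L. z ^ j) = 0" by (simp add: sum_gp_strict)
  then have "Re (\<Sum>j<nat L. z ^ j) = 0" by simp
  then show ?thesis using False by (simp add: Re_sum z_pow)
qed

text \<open>Fourier inversion on \<open>\<int>/L\<close>: the indicator of \<open>L\<int>\<close> is the average of the \<open>L\<close> characters,
  each of which is an eigenfunction of the walk operator.\<close>

lemma walk_expectation_multiples_tendsto:
  assumes "finite S" "S \<noteq> {}" "\<forall>s\<in>S. - s \<in> S" "int_generated S = UNIV" "L > 0"
  shows "(\<lambda>n. walk_expectation S n (indicator {x. L dvd x})) \<longlonglongrightarrow> 1 / real_of_int L"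
proof -
  define \<theta> where "\<theta> j = 2 * pi * real j / real_of_int L" for j :: nat
  have indicator: "indicator {x. L dvd x}
      = (\<lambda>x. \<Sum>j<nat L. (1 / real_of_int L) * cos (\<theta> j * real_of_int x))"
    unfolding \<theta>_def sum_distrib_left[symmetric] sum_cos_roots_of_unity[OF assms(5)]
    using assms(5) by (auto simp: indicator_def)
  have expectation: "walk_expectation S n (indicator {x. L dvd x}) =
      (\<Sum>j<nat L. (1 / real_of_int L) * lazy_char S (\<theta> j) ^ n)" for n
    unfolding walk_expectation_eq_funpow[OF assms(1,2)] indicator funpow_walk_op_sum[OF finite_lessThan]
      funpow_walk_op_cmult funpow_walk_op_cos[OF assms(3)] by simp
  have "(\<lambda>n. (1 / real_of_int L) * lazy_char S (\<theta> j) ^ n) \<longlonglongrightarrow> (if j = 0 then 1 / real_of_int L else 0)"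
    if "j < nat L" for j
  proof (cases "j = 0")
    case True
    then show ?thesis using lazy_char_zero[OF assms(1,2)] unfolding \<theta>_def by simp
  next
    case False
    then have "lazy_char S (\<theta> j) < 1"
      unfolding \<theta>_def using lazy_char_less_one[OF assms(1,2,4)] that by simp
    then have "(\<lambda>n. lazy_char S (\<theta> j) ^ n) \<longlonglongrightarrow> 0"
      using lazy_char_bounds[OF assms(1,2)] by (intro LIMSEQ_power_zero) auto
    then show ?thesis using False by (simp add: tendsto_divide_zero)
  qed
  then have "(\<lambda>n. \<Sum>j<nat L. (1 / real_of_int L) * lazy_char S (\<theta> j) ^ n)
      \<longlonglongrightarrow> (\<Sum>j<nat L. if j = 0 then 1 / real_of_int L else 0)"
    by (intro tendsto_sum) simp
  then show ?thesis unfolding expectation using assms(5) by (simp add: sum.delta')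
qed

section \<open>Return probabilities\<close>

definition half_shift :: "int \<Rightarrow> (int \<Rightarrow> real) \<Rightarrow> int \<Rightarrow> real" where
  "half_shift a f y = (f y + f (y + a)) / 2"

lemma walk_op_eq_mean_half_shift:
  assumes "finite S" "S \<noteq> {}"
  shows "walk_op S f y = (\<Sum>s\<in>S. half_shift s f y) / card S"
proof -
  have "(\<Sum>s\<in>S. half_shift s f y) = (card S * f y + (\<Sum>s\<in>S. f (y + s))) / 2"
    unfolding half_shift_def sum_divide_distrib[symmetric] sum.distrib by simp
  then show ?thesis using assms unfolding walk_op_def by (simp add: field_simps card_gt_0_iff)
qed

lemma half_shift_walk_op: "half_shift a (walk_op S f) = walk_op S (half_shift a f)"
proof
  fix y
  have "(\<Sum>s\<in>S. half_shift a f (y + s)) = ((\<Sum>s\<in>S. f (y + s)) + (\<Sum>s\<in>S. f (y + a + s))) / 2"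
    unfolding half_shift_def sum_divide_distrib[symmetric] sum.distrib[symmetric] by (simp add: ac_simps)
  then show "half_shift a (walk_op S f) y = walk_op S (half_shift a f) y"
    unfolding walk_op_def half_shift_def by (simp add: add_divide_distrib)
qed

lemma half_shift_funpow_walk_op: "half_shift a ((walk_op S ^^ n) f) = (walk_op S ^^ n) (half_shift a f)"
  by (induction n) (simp_all add: half_shift_walk_op)

lemma half_shift_le:
  assumes "\<And>y. f y \<le> M"
  shows "half_shift a f y \<le> M"
proof -
  have "f y + f (y + a) \<le> 2 * M" using assms[of y] assms[of "y + a"] by linarith
  then show ?thesis unfolding half_shift_def by simp
qed

lemma expectation_binomial_pmf_Suc:
  assumes "p \<in> {0..1}"
  shows "measure_pmf.expectation (binomial_pmf (Suc n) p) (h :: nat \<Rightarrow> real) =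
     p * measure_pmf.expectation (binomial_pmf n p) (\<lambda>k. h (Suc k)) +
     (1 - p) * measure_pmf.expectation (binomial_pmf n p) h"
proof -
  have "binomial_pmf (Suc n) p =
      bernoulli_pmf p \<bind> (\<lambda>b. map_pmf (\<lambda>k. (if b then 1 else 0) + k) (binomial_pmf n p))"
    using binomial_pmf_Suc[OF assms] by (simp add: map_pmf_def)
  then have "measure_pmf.expectation (binomial_pmf (Suc n) p) h =
     (\<Sum>b\<in>UNIV. pmf (bernoulli_pmf p) b *\<^sub>R
        measure_pmf.expectation (map_pmf (\<lambda>k. (if b then 1 else 0) + k) (binomial_pmf n p)) h)"
    using finite_set_pmf_binomial_pmf[OF assms, of n] by (simp only:, intro pmf_expectation_bind) auto
  then show ?thesis using assms by (simp add: UNIV_bool)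
qed

lemma funpow_half_shift_eq_expectation:
  "(half_shift a ^^ j) f y = measure_pmf.expectation (binomial_pmf j (1/2)) (\<lambda>i. f (y + int i * a))"
proof (induction j arbitrary: y)
  case (Suc j)
  have "(half_shift a ^^ Suc j) f y = ((half_shift a ^^ j) f y + (half_shift a ^^ j) f (y + a)) / 2"
    by (simp add: half_shift_def)
  also have "\<dots> = measure_pmf.expectation (binomial_pmf (Suc j) (1/2)) (\<lambda>i. f (y + int i * a))"
    by (simp add: Suc.IH expectation_binomial_pmf_Suc algebra_simps)
  finally show ?case .
qed (simp add: binomial_pmf_0)

definition max_binomial_prob :: "nat \<Rightarrow> real" where
  "max_binomial_prob j = real (j choose (j div 2)) / 2 ^ j"

lemma max_binomial_prob_nonneg: "max_binomial_prob j \<ge> 0"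
  by (simp add: max_binomial_prob_def)

lemma central_binomial_Suc:
  "real ((2 * Suc m) choose Suc m) = 2 * (2 * real m + 1) * real ((2 * m) choose m) / (real m + 1)"
proof -
  have "Suc (2 * m) choose Suc m = Suc (2 * m) choose m"
    using binomial_symmetric[of "Suc m" "Suc (2 * m)"] by simp
  then have "real (Suc (2 * m)) * real ((2 * m) choose m) = real (Suc (2 * m) choose m) * real (Suc m)"
    using Suc_times_binomial_eq[of "2 * m" m] by (metis of_nat_mult)
  then have X: "real (Suc (2 * m) choose m) = (2 * real m + 1) * real ((2 * m) choose m) / (real m + 1)"
    by (simp add: field_simps del: binomial_Suc_Suc)
  have "Suc (Suc (2 * m)) = 2 * Suc m" by simp
  then have "real (2 * Suc m) * real (Suc (2 * m) choose m) = real ((2 * Suc m) choose Suc m) * real (Suc m)"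
    using Suc_times_binomial_eq[of "Suc (2 * m)" m] by (metis of_nat_mult)
  then have "real (Suc m) * real ((2 * Suc m) choose Suc m) = real (Suc m) * (2 * real (Suc (2 * m) choose m))"
    by (simp add: algebra_simps del: binomial_Suc_Suc)
  then have "real ((2 * Suc m) choose Suc m) = 2 * real (Suc (2 * m) choose m)"
    by (simp del: binomial_Suc_Suc)
  then show ?thesis unfolding X by (simp del: binomial_Suc_Suc)
qed

lemma central_binomial_sq_le: "(real ((2 * m) choose m) / 4 ^ m)^2 * (2 * m + 1) \<le> 1"
proof (induction m)
  case (Suc m)
  define c where "c = real ((2 * m) choose m) / 4 ^ m"
  define d where "d = real ((2 * Suc m) choose Suc m) / 4 ^ Suc m"
  have "d = (2 * (2 * real m + 1) * real ((2 * m) choose m)) / ((real m + 1) * (4 * 4 ^ m))"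
    unfolding d_def central_binomial_Suc by simp
  also have "\<dots> = (2 * real m + 1) / (2 * (real m + 1)) * c"
    unfolding c_def by (simp add: divide_simps) (simp add: algebra_simps)
  finally have d_eq: "d = (2 * real m + 1) / (2 * (real m + 1)) * c" .
  have "d^2 * (2 * real (Suc m) + 1)
      = (c^2 * (2 * m + 1)) * ((2 * real m + 1) * (2 * real m + 3) / (4 * (real m + 1)^2))"
    unfolding d_eq by (simp add: field_simps power2_eq_square)
  also have "\<dots> \<le> 1 * 1"
  proof (rule mult_mono)
    have "(2 * real m + 1) * (2 * real m + 3) \<le> 4 * (real m + 1)^2"
      by (simp add: power2_eq_square algebra_simps)
    then show "(2 * real m + 1) * (2 * real m + 3) / (4 * (real m + 1)^2) \<le> 1"
      by (simp add: field_simps)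
  qed (use Suc.IH in \<open>auto simp: c_def\<close>)
  finally show ?case unfolding d_def by simp
qed simp

lemma max_binomial_prob_le_central: "max_binomial_prob j \<le> real ((2 * (j div 2)) choose (j div 2)) / 4 ^ (j div 2)"
proof -
  define m where "m = j div 2"
  have "j = 2 * m \<or> j = Suc (2 * m)" unfolding m_def by presburger
  then show ?thesis
  proof
    assume "j = 2 * m"
    then show ?thesis by (simp add: m_def[symmetric] max_binomial_prob_def power_mult)
  next
    assume j: "j = Suc (2 * m)"
    have "Suc (2 * m) choose m \<le> 2 * ((2 * m) choose m)"
    proof (cases m)
      case (Suc k)
      have "Suc (2 * m) choose m = ((2 * m) choose k) + ((2 * m) choose m)"
        using Suc binomial_Suc_Suc[of "2 * m" k] by simp
      then show ?thesis using binomial_maximum'[of m k] by linarith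
    qed simp
    then have "real (Suc (2 * m) choose m) \<le> 2 * real ((2 * m) choose m)" by linarith
    moreover have "(2::real) ^ Suc (2 * m) = 2 * 4 ^ m" by (simp add: power_mult)
    ultimately show ?thesis using j by (simp add: m_def[symmetric] max_binomial_prob_def field_simps)
  qed
qed

lemma max_binomial_prob_sq_le: "(max_binomial_prob j)^2 \<le> 2 / (real j + 1)"
proof -
  define m where "m = j div 2"
  have "(max_binomial_prob j)^2 \<le> (real ((2 * m) choose m) / 4 ^ m)^2"
    using max_binomial_prob_le_central[of j] max_binomial_prob_nonneg[of j]
    unfolding m_def by (simp add: power_mono)
  also have "\<dots> \<le> 1 / (2 * m + 1)" using central_binomial_sq_le[of m] by (simp add: field_simps)
  also have "\<dots> \<le> 2 / (real j + 1)"
  proof -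
    have "real j \<le> 2 * real m + 1" unfolding m_def by linarith
    then show ?thesis by (simp add: field_simps)
  qed
  finally show ?thesis .
qed

lemma max_binomial_prob_le:
  assumes "t > 0"
  shows "max_binomial_prob j \<le> 1 / (2 * t) + t / (real j + 1)"
proof -
  have "max_binomial_prob j \<le> (1 / t + t * (max_binomial_prob j)^2) / 2"
  proof -
    have "0 \<le> (1 - t * max_binomial_prob j)^2 / t" using assms by simp
    then show ?thesis using assms by (simp add: field_simps power2_eq_square)
  qed
  also have "\<dots> \<le> (1 / t + t * (2 / (real j + 1))) / 2"
    using mult_left_mono[OF max_binomial_prob_sq_le[of j], of t] assms by simp
  finally show ?thesis by (simp add: field_simps)
qed

lemma funpow_half_shift_indicator_le:
  assumes "a \<noteq> 0"
  shows "(half_shift a ^^ j) (\<lambda>y. if y = x then 1 else 0) y \<le> max_binomial_prob j"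
proof (cases "\<exists>i. y + int i * a = x")
  case True
  then obtain i0 where i0: "y + int i0 * a = x" by blast
  have "(\<lambda>i. if y + int i * a = x then 1 else 0 :: real) = indicator {i0}"
    using i0 assms by (auto simp: indicator_def)
  then have "(half_shift a ^^ j) (\<lambda>y. if y = x then 1 else 0) y = pmf (binomial_pmf j (1/2)) i0"
    by (simp add: funpow_half_shift_eq_expectation measure_pmf_single)
  also have "\<dots> \<le> max_binomial_prob j"
  proof (cases "i0 \<le> j")
    case True
    then have "pmf (binomial_pmf j (1/2)) i0 = real (j choose i0) / 2 ^ j"
      by (simp add: power_add[symmetric] power_one_over)
    then show ?thesis
      unfolding max_binomial_prob_def using binomial_maximum[of j i0] by (simp add: divide_right_mono)
  qed (simp add: max_binomial_prob_nonneg binomial_eq_0)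
  finally show ?thesis .
next
  case False
  then show ?thesis
    using max_binomial_prob_nonneg[of j] by (simp add: funpow_half_shift_eq_expectation)
qed

text \<open>As an average of half shifts, each step of the walk applies the half shift by \<open>a\<close> with
  probability \<open>1/|S|\<close>; the other half shifts are estimated by the supremum.\<close>

lemma funpow_walk_op_half_shift_le:
  assumes "finite S" "a \<in> S" and bound: "\<And>j y. (half_shift a ^^ j) f y \<le> B j"
  shows "(walk_op S ^^ n) ((half_shift a ^^ j) f) y
     \<le> measure_pmf.expectation (binomial_pmf n (1 / card S)) (\<lambda>i. B (j + i))"
proof -
  have ne: "S \<noteq> {}" using assms(2) by blast
  then have c: "real (card S) \<ge> 1" using assms(1) by (simp add: Suc_le_eq card_gt_0_iff)
  then have p: "1 / real (card S) \<in> {0..1}" by simp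
  show ?thesis
  proof (induction n arbitrary: j y)
    case 0
    then show ?case using bound p by (simp add: binomial_pmf_0)
  next
    case (Suc n)
    define F where "F j = measure_pmf.expectation (binomial_pmf n (1 / card S)) (\<lambda>i. B (j + i))" for j
    define g where "g = (walk_op S ^^ n) ((half_shift a ^^ j) f)"
    have g_le: "g z \<le> F j" for z using Suc.IH unfolding F_def g_def .
    have "(walk_op S ^^ Suc n) ((half_shift a ^^ j) f) y = (\<Sum>s\<in>S. half_shift s g y) / card S"
      using assms(1) ne by (simp add: g_def walk_op_eq_mean_half_shift[where S = S])
    also have "(\<Sum>s\<in>S. half_shift s g y) = half_shift a g y + (\<Sum>s\<in>S - {a}. half_shift s g y)"
      using assms(1,2) by (rule sum.remove)
    also have "half_shift a g y = (walk_op S ^^ n) ((half_shift a ^^ Suc j) f) y"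
      unfolding g_def half_shift_funpow_walk_op by simp
    also have "\<dots> \<le> F (Suc j)" unfolding F_def by (rule Suc.IH)
    also have "(\<Sum>s\<in>S - {a}. half_shift s g y) \<le> (real (card S) - 1) * F j"
      using sum_mono[of "S - {a}" "\<lambda>s. half_shift s g y" "\<lambda>_. F j"] half_shift_le[OF g_le] assms(1,2) c
      by (simp add: card_Diff_singleton of_nat_diff)
    finally have "(walk_op S ^^ Suc n) ((half_shift a ^^ j) f) y
        \<le> (1 / card S) * F (Suc j) + (1 - 1 / card S) * F j"
      using c by (simp add: divide_right_mono field_simps)
    then show ?case unfolding F_def expectation_binomial_pmf_Suc[OF p] by simp
  qed
qed

lemma expectation_binomial_inverse_le:
  assumes "0 < p" "p \<le> 1"
  shows "measure_pmf.expectation (binomial_pmf n p) (\<lambda>i. 1 / (real i + 1)) \<le> 1 / ((real n + 1) * p)"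
proof -
  let ?b = "\<lambda>n i. real (n choose i) * p ^ i * (1 - p) ^ (n - i)"
  have "measure_pmf.expectation (binomial_pmf n p) (\<lambda>i. 1 / (real i + 1)) = (\<Sum>i\<le>n. 1 / (real i + 1) * ?b n i)"
    using assms by (subst integral_measure_pmf_real[of "{..n}"]) (auto simp: set_pmf_binomial_eq split: if_splits)
  also have "\<dots> = (\<Sum>i\<le>n. ?b (Suc n) (Suc i)) / ((real n + 1) * p)"
    unfolding sum_divide_distrib
  proof (intro sum.cong refl)
    fix i
    have "real (Suc n) * real (n choose i) = real (Suc n choose Suc i) * real (Suc i)"
      using arg_cong[OF Suc_times_binomial_eq[of n i], of real] by (simp only: of_nat_mult)
    then have choose: "real (n choose i) / (real i + 1) = real (Suc n choose Suc i) / (real n + 1)"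
      by (simp add: field_simps del: binomial_Suc_Suc)
    have "1 / (real i + 1) * ?b n i = real (n choose i) / (real i + 1) * (p ^ i * (1 - p) ^ (n - i))"
      by (simp add: field_simps del: binomial_Suc_Suc)
    also have "\<dots> = ?b (Suc n) (Suc i) / ((real n + 1) * p)"
    proof -
      have "p + p * real n > 0" using assms by (simp add: add_pos_nonneg)
      then show ?thesis unfolding choose by (simp add: field_simps del: binomial_Suc_Suc)
    qed
    finally show "1 / (real i + 1) * ?b n i = ?b (Suc n) (Suc i) / ((real n + 1) * p)" .
  qed
  also have "\<dots> \<le> (\<Sum>i\<le>Suc n. ?b (Suc n) i) / ((real n + 1) * p)"
    unfolding sum.atMost_Suc_shift[of _ n] using assms by (intro divide_right_mono) (simp_all del: binomial_Suc_Suc)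
  also have "(\<Sum>i\<le>Suc n. ?b (Suc n) i) = 1"
    using binomial_ring[of p "1 - p" "Suc n"] by (simp add: atLeast0AtMost)
  finally show ?thesis .
qed

lemma expectation_max_binomial_prob_le:
  assumes "0 < p" "p \<le> 1"
  shows "measure_pmf.expectation (binomial_pmf n p) max_binomial_prob \<le> 3 / (2 * sqrt ((real n + 1) * p))"
proof -
  define t where "t = sqrt ((real n + 1) * p)"
  have t: "t > 0" "t * t = (real n + 1) * p" unfolding t_def using assms by simp_all
  have integrable: "integrable (measure_pmf (binomial_pmf n p)) (h :: nat \<Rightarrow> real)" for h
    using assms by (intro integrable_measure_pmf_finite) auto
  have "measure_pmf.expectation (binomial_pmf n p) max_binomial_prob
      \<le> measure_pmf.expectation (binomial_pmf n p) (\<lambda>i. 1 / (2 * t) + t * (1 / (real i + 1)))"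
    using max_binomial_prob_le[OF t(1)] by (intro integral_mono integrable) simp
  also have "\<dots> = 1 / (2 * t) + t * measure_pmf.expectation (binomial_pmf n p) (\<lambda>i. 1 / (real i + 1))"
  proof -
    have "measure_pmf.expectation (binomial_pmf n p) (\<lambda>i. 1 / (2 * t) + t * (1 / (real i + 1)))
        = measure_pmf.expectation (binomial_pmf n p) (\<lambda>i. 1 / (2 * t))
          + measure_pmf.expectation (binomial_pmf n p) (\<lambda>i. t * (1 / (real i + 1)))"
      by (rule Bochner_Integration.integral_add[OF integrable integrable])
    then show ?thesis by (simp only: integral_mult_right_zero) simp
  qed
  also have "\<dots> \<le> 1 / (2 * t) + t * (1 / ((real n + 1) * p))"
    using mult_left_mono[OF expectation_binomial_inverse_le[OF assms, of n], of t] t by simp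
  also have "\<dots> = 3 / (2 * t)"
  proof -
    have "t * (1 / ((real n + 1) * p)) = 1 / t" by (subst t(2)[symmetric]) (use t(1) in simp)
    then show ?thesis by (simp add: field_simps)
  qed
  finally show ?thesis unfolding t_def .
qed

lemma pmf_lazy_walk_le:
  assumes "finite S" "a \<in> S" "a \<noteq> 0"
  shows "pmf (lazy_walk S n) x \<le> 3 / 2 * sqrt (card S) / sqrt (real n + 1)"
proof -
  have ne: "S \<noteq> {}" using assms(2) by blast
  then have c: "real (card S) \<ge> 1" using assms(1) by (simp add: Suc_le_eq card_gt_0_iff)
  have "pmf (lazy_walk S n) x = (walk_op S ^^ n) ((half_shift a ^^ 0) (\<lambda>y. if y = x then 1 else 0)) 0"
    using pmf_lazy_walk_eq_funpow[OF assms(1) ne] by simp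
  also have "\<dots> \<le> measure_pmf.expectation (binomial_pmf n (1 / card S)) max_binomial_prob"
    using funpow_walk_op_half_shift_le[OF assms(1,2) funpow_half_shift_indicator_le[OF assms(3)],
        where n = n and j = 0 and y = 0] by simp
  also have "\<dots> \<le> 3 / (2 * sqrt ((real n + 1) * (1 / card S)))"
    using c by (intro expectation_max_binomial_prob_le) auto
  also have "\<dots> = 3 / 2 * sqrt (card S) / sqrt (real n + 1)"
    using c by (simp add: real_sqrt_divide real_sqrt_mult field_simps)
  finally show ?thesis .
qed

section \<open>The expectation of \<open>D\<^sub>\<int>\<close> along the walk\<close>

lemma exists_nonzero_generator:
  assumes "int_generated S = UNIV"
  shows "\<exists>a\<in>S. a \<noteq> 0"
proof (rule ccontr)
  assume "\<not> (\<exists>a\<in>S. a \<noteq> 0)"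
  then have "int_generated S \<subseteq> {0}"
    by (intro int_generated_least) (auto simp: int_subgroup_def)
  then have "(1::int) \<in> {0}" using assms by blast
  then show False by simp
qed

lemma const_div_sqrt_tendsto_zero: "(\<lambda>n. c / sqrt (real n + 1)) \<longlonglongrightarrow> 0"
proof -
  have "(\<lambda>n. sqrt (inverse (real (Suc n)))) \<longlonglongrightarrow> sqrt 0"
    by (rule tendsto_real_sqrt[OF LIMSEQ_inverse_real_of_nat])
  then have "(\<lambda>n. c * sqrt (inverse (real (Suc n)))) \<longlonglongrightarrow> c * 0"
    by (intro tendsto_mult tendsto_const) simp
  moreover have "c * sqrt (inverse (real (Suc n))) = c / sqrt (real n + 1)" for n
    by (simp add: real_sqrt_inverse divide_inverse add.commute)
  ultimately show ?thesis by simp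
qed

lemma pmf_lazy_walk_tendsto_zero:
  assumes "finite S" "a \<in> S" "a \<noteq> 0"
  shows "(\<lambda>n. pmf (lazy_walk S n) x) \<longlonglongrightarrow> 0"
proof (rule real_tendsto_sandwich[OF _ _ tendsto_const const_div_sqrt_tendsto_zero[of "3 / 2 * sqrt (card S)"]])
  show "\<forall>\<^sub>F n in sequentially. 0 \<le> pmf (lazy_walk S n) x" by simp
  show "\<forall>\<^sub>F n in sequentially. pmf (lazy_walk S n) x \<le> 3 / 2 * sqrt (card S) / sqrt (real n + 1)"
    using pmf_lazy_walk_le[OF assms] by simp
qed

lemma walk_expectation_DZ:
  assumes "finite S" "S \<noteq> {}"
  shows "walk_expectation S n (\<lambda>x. real (DZ x))
    = 2 * walk_expectation S n (indicator (- {0})) + (\<Sum>k. walk_expectation S n (indicator (Lambda (k + 2) - {0})))"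
proof -
  let ?W = "lazy_walk S n" and ?I = "\<lambda>k. indicator (Lambda (k + 2) - {0}) :: int \<Rightarrow> real"
  have E: "walk_expectation S n f = (\<Sum>x\<in>set_pmf ?W. f x * pmf ?W x)" for f
    using finite_set_pmf_lazy_walk[OF assms] by (subst integral_measure_pmf_real) auto
  have summable: "summable (\<lambda>k. ?I k x)" for x using DZ_sums[of x] by (rule sums_summable)
  have "real (DZ x) = 2 * indicator (- {0}) x + (\<Sum>k. ?I k x)" for x
    using sums_unique[OF DZ_sums[of x]] by simp
  then have "walk_expectation S n (\<lambda>x. real (DZ x))
      = 2 * (\<Sum>x\<in>set_pmf ?W. indicator (- {0}) x * pmf ?W x) + (\<Sum>x\<in>set_pmf ?W. (\<Sum>k. ?I k x) * pmf ?W x)"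
    unfolding E by (simp add: distrib_right sum.distrib sum_distrib_left mult.assoc)
  also have "(\<Sum>x\<in>set_pmf ?W. (\<Sum>k. ?I k x) * pmf ?W x) = (\<Sum>x\<in>set_pmf ?W. \<Sum>k. ?I k x * pmf ?W x)"
    by (intro sum.cong refl suminf_mult2 summable)
  also have "\<dots> = (\<Sum>k. \<Sum>x\<in>set_pmf ?W. ?I k x * pmf ?W x)"
    by (rule suminf_sum[symmetric]) (intro summable_mult2 summable)
  finally show ?thesis unfolding E .
qed

lemma walk_expectation_nonzero_tendsto:
  assumes "finite S" "a \<in> S" "a \<noteq> 0"
  shows "(\<lambda>n. walk_expectation S n (indicator (- {0}))) \<longlonglongrightarrow> 1"
proof -
  have "walk_expectation S n (indicator (- {0})) = 1 - pmf (lazy_walk S n) 0" for n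
    using measure_pmf.prob_compl[where M = "lazy_walk S n" and A = "{0}"]
    by (simp add: measure_pmf_single Compl_eq_Diff_UNIV)
  then show ?thesis
    using tendsto_diff[OF tendsto_const pmf_lazy_walk_tendsto_zero[OF assms]] by simp
qed

lemma walk_expectation_Lambda_tendsto:
  assumes "finite S" "\<forall>s\<in>S. - s \<in> S" "int_generated S = UNIV" "a \<in> S" "a \<noteq> 0"
  shows "(\<lambda>n. walk_expectation S n (indicator (Lambda k - {0}))) \<longlonglongrightarrow> 1 / real (int_index (Lambda k))"
proof -
  have "walk_expectation S n (indicator (Lambda k - {0}))
      = walk_expectation S n (indicator {x. lcm_upto k dvd x}) - pmf (lazy_walk S n) 0" for n
    using measure_pmf.finite_measure_Diff[where M = "lazy_walk S n" and A = "Lambda k" and B = "{0}"]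
    by (simp add: Lambda_eq_multiples measure_pmf_single)
  moreover have "(\<lambda>n. walk_expectation S n (indicator {x. lcm_upto k dvd x}) - pmf (lazy_walk S n) 0)
      \<longlonglongrightarrow> 1 / real_of_int (lcm_upto k) - 0"
    using assms(4) by (intro tendsto_diff walk_expectation_multiples_tendsto[OF assms(1) _ assms(2,3) lcm_upto_pos]
        pmf_lazy_walk_tendsto_zero[OF assms(1,4,5)]) blast
  ultimately show ?thesis using lcm_upto_pos[of k] by (simp add: int_index_Lambda)
qed

lemma
  assumes "l > 0" "R \<ge> 0"
  shows finite_nonzero_multiples: "finite {x. x \<noteq> 0 \<and> l dvd x \<and> real_of_int \<bar>x\<bar> \<le> R}"
    and card_nonzero_multiples_le: "real (card {x. x \<noteq> 0 \<and> l dvd x \<and> real_of_int \<bar>x\<bar> \<le> R}) \<le> 2 * R / l"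
proof -
  define N where "N = \<lfloor>R / real_of_int l\<rfloor>"
  have subset: "{x. x \<noteq> 0 \<and> l dvd x \<and> real_of_int \<bar>x\<bar> \<le> R} \<subseteq> (\<lambda>i. l * i) ` ({-N..-1} \<union> {1..N})"
  proof
    fix x assume x: "x \<in> {x. x \<noteq> 0 \<and> l dvd x \<and> real_of_int \<bar>x\<bar> \<le> R}"
    then obtain i where "x = l * i" by auto
    with x assms(1) have x: "x = l * i" "i \<noteq> 0" "real_of_int l * real_of_int \<bar>i\<bar> \<le> R"
      by (auto simp: abs_mult)
    then have "\<bar>i\<bar> \<le> N" unfolding N_def using assms(1) by (simp add: le_floor_iff field_simps)
    then show "x \<in> (\<lambda>i. l * i) ` ({-N..-1} \<union> {1..N})" using x(1,2) by force
  qed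
  then show "finite {x. x \<noteq> 0 \<and> l dvd x \<and> real_of_int \<bar>x\<bar> \<le> R}" by (rule finite_subset) simp
  have "card {x. x \<noteq> 0 \<and> l dvd x \<and> real_of_int \<bar>x\<bar> \<le> R} \<le> card ({-N..-1} \<union> {1..N})"
    using card_mono[OF _ subset] card_image_le[of "{-N..-1} \<union> {1..N}" "\<lambda>i. l * i"] by simp
  also have "\<dots> \<le> nat N + nat N" using card_Un_le[of "{-N..-1}" "{1..N}"] by simp
  finally have "real (card {x. x \<noteq> 0 \<and> l dvd x \<and> real_of_int \<bar>x\<bar> \<le> R}) \<le> real (nat N + nat N)"
    by (simp only: of_nat_le_iff)
  also have "\<dots> = 2 * real_of_int N" using assms unfolding N_def by simp
  also have "\<dots> \<le> 2 * R / l"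
    using mult_left_mono[OF of_int_floor_le[of "R / real_of_int l"], of 2] unfolding N_def by simp
  finally show "real (card {x. x \<noteq> 0 \<and> l dvd x \<and> real_of_int \<bar>x\<bar> \<le> R}) \<le> 2 * R / l" .
qed

text \<open>Multiples of \<open>l\<close> in \<open>[-R, R]\<close> are controlled by the return-probability bound, those outside
  by Chebyshev's inequality.\<close>

lemma walk_expectation_nonzero_multiples_le:
  assumes "finite S" "\<forall>s\<in>S. - s \<in> S" "a \<in> S" "a \<noteq> 0" "l > 0" "R > 0"
  shows "walk_expectation S n (indicator ({x. l dvd x} - {0}))
    \<le> 2 * R / l * (3 / 2 * sqrt (card S) / sqrt (real n + 1)) + real n * lazy_step_var S / R^2"
proof -
  have ne: "S \<noteq> {}" using assms(3) by blast
  define A where "A = {x. x \<noteq> 0 \<and> l dvd x \<and> real_of_int \<bar>x\<bar> \<le> R}"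
  have "indicator ({x. l dvd x} - {0}) x \<le> indicator A x + (real_of_int x)^2 / R^2" for x
  proof (cases "x \<in> ({x. l dvd x} - {0}) - A")
    case True
    then have "R \<le> \<bar>real_of_int x\<bar>" by (auto simp: A_def)
    then have "R^2 \<le> \<bar>real_of_int x\<bar>^2" using assms(6) by (intro power_mono) auto
    then have "R^2 \<le> (real_of_int x)^2" by simp
    then show ?thesis using True assms(6) by simp
  qed (auto simp: A_def indicator_def)
  then have "walk_expectation S n (indicator ({x. l dvd x} - {0}))
      \<le> walk_expectation S n (\<lambda>x. indicator A x + (real_of_int x)^2 / R^2)"
    by (rule walk_expectation_mono[OF assms(1) ne])
  also have "\<dots> = walk_expectation S n (indicator A) + walk_expectation S n (\<lambda>x. (real_of_int x)^2) / R^2"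
    unfolding walk_expectation_add[OF assms(1) ne] by simp
  also have "walk_expectation S n (indicator A) = (\<Sum>x\<in>A. pmf (lazy_walk S n) x)"
    using finite_nonzero_multiples[OF assms(5), of R] assms(6) by (simp add: A_def measure_measure_pmf_finite)
  also have "\<dots> \<le> real (card A) * (3 / 2 * sqrt (card S) / sqrt (real n + 1))"
    by (rule sum_bounded_above) (rule pmf_lazy_walk_le[OF assms(1,3,4)])
  also have "\<dots> \<le> 2 * R / l * (3 / 2 * sqrt (card S) / sqrt (real n + 1))"
    using card_nonzero_multiples_le[OF assms(5), of R] assms(6) unfolding A_def
    by (intro mult_right_mono) auto
  finally show ?thesis using walk_expectation_square[OF assms(1) ne assms(2)] by simp
qed

lemma walk_expectation_Lambda_le:
  assumes "finite S" "\<forall>s\<in>S. - s \<in> S" "a \<in> S" "a \<noteq> 0"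
  shows "walk_expectation S n (indicator (Lambda (k + 2) - {0}))
    \<le> (12 * sqrt (card S) + lazy_step_var S) / (real k + 1)^2"
proof -
  define l where "l = lcm_upto (k + 2)"
  define R where "R = (real k + 1) * sqrt (real n + 1)"
  have l: "l > 0" unfolding l_def by (rule lcm_upto_pos)
  have "(real k + 1) * (real k + 1)^2 \<le> 4 * real_of_int l"
    using lcm_upto_cube_bound[of k] unfolding l_def by (simp add: power3_eq_cube power2_eq_square)
  then have "(real k + 1) / real_of_int l \<le> 4 / (real k + 1)^2"
    using l by (simp add: field_simps)
  then have "2 * R / l * (3 / 2 * sqrt (card S) / sqrt (real n + 1)) \<le> 12 * sqrt (card S) / (real k + 1)^2"
  proof -
    assume ratio: "(real k + 1) / real_of_int l \<le> 4 / (real k + 1)^2"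
    have "2 * R / l * (3 / 2 * sqrt (card S) / sqrt (real n + 1)) = 3 * sqrt (card S) * ((real k + 1) / l)"
      unfolding R_def using l by (simp add: field_simps)
    also have "\<dots> \<le> 3 * sqrt (card S) * (4 / (real k + 1)^2)" using ratio by (intro mult_left_mono) auto
    finally show ?thesis by simp
  qed
  moreover have "real n * lazy_step_var S / R^2 \<le> lazy_step_var S / (real k + 1)^2"
  proof -
    have "R^2 = (real k + 1)^2 * (real n + 1)" unfolding R_def by (simp add: power_mult_distrib)
    then have "real n * lazy_step_var S / R^2 = real n / (real n + 1) * (lazy_step_var S / (real k + 1)^2)"
      by simp
    also have "\<dots> \<le> lazy_step_var S / (real k + 1)^2"
      by (rule mult_left_le_one_le) (simp_all add: lazy_step_var_nonneg)
    finally show ?thesis .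
  qed
  moreover have "R > 0" unfolding R_def by simp
  ultimately show ?thesis
    using walk_expectation_nonzero_multiples_le[OF assms l, of R n]
    by (simp add: l_def Lambda_eq_multiples add_divide_distrib)
qed

theorem corollary4p5:
  fixes S :: "int set"
  assumes "finite S"
    and "\<forall>s\<in>S. - s \<in> S"
    and "int_generated S = UNIV"
  shows "summable (\<lambda>k. 1 / real (int_index (Lambda (k + 2))))
    \<and> (\<lambda>n. measure_pmf.expectation (lazy_walk S n) (\<lambda>x. real (DZ x)))
        \<longlonglongrightarrow> 2 + (\<Sum>k. 1 / real (int_index (Lambda (k + 2))))"
proof -
  from exists_nonzero_generator[OF assms(3)] obtain a where a: "a \<in> S" "a \<noteq> 0" ..
  define M where "M k = (12 * sqrt (card S) + lazy_step_var S) * inverse (real (Suc k) ^ 2)" for k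
  have "summable (\<lambda>k. inverse (real k ^ 2))" by (rule inverse_power_summable) simp
  then have "summable (\<lambda>k. inverse (real (Suc k) ^ 2))" by (subst summable_Suc_iff)
  then have "summable M" unfolding M_def by (rule summable_mult)
  moreover have "norm (walk_expectation S n (indicator (Lambda (k + 2) - {0}))) \<le> M k" for k n
    using walk_expectation_Lambda_le[OF assms(1,2) a, of n k]
    by (simp add: M_def divide_inverse add.commute)
  ultimately have tannery: "summable (\<lambda>k. norm (1 / real (int_index (Lambda (k + 2)))))
      \<and> (\<lambda>n. \<Sum>k. walk_expectation S n (indicator (Lambda (k + 2) - {0})))
          \<longlonglongrightarrow> (\<Sum>k. 1 / real (int_index (Lambda (k + 2))))"
    using tannerys_theorem[where M = M and F = sequentially, OF walk_expectation_Lambda_tendsto[OF assms a]]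
    by (simp add: always_eventually)
  then have "(\<lambda>n. 2 * walk_expectation S n (indicator (- {0}))
      + (\<Sum>k. walk_expectation S n (indicator (Lambda (k + 2) - {0}))))
      \<longlonglongrightarrow> 2 * 1 + (\<Sum>k. 1 / real (int_index (Lambda (k + 2))))"
    by (intro tendsto_add tendsto_mult tendsto_const walk_expectation_nonzero_tendsto[OF assms(1) a]) auto
  moreover have "S \<noteq> {}" using a by blast
  ultimately show ?thesis using tannery summable_norm_cancel walk_expectation_DZ[OF assms(1)] by simp
qed

end
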